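(* Let $N\ge2$, $t,r\ge1$, $m=t+r<N$, $K\ge N$, and let $\mathbf{z}\in\mathbb{C}^N$ and $\mathbf{S}\in\mathbb{C}^{N\times N}$ Hermitian positive definite. Define the GLRT statistic $$t_{\mathrm{GLRT}}=\frac{1+\mathbf{z}^\dagger\mathbf{S}^{-1/2}\mathbf{P}^\perp_{\mathbf{S}^{-1/2}\mathbf{E}_t}\mathbf{S}^{-1/2}\mathbf{z}}{1+\mathbf{z}^\dagger\mathbf{S}^{-1/2}\mathbf{P}^\perp_{\mathbf{S}^{-1/2}\mathbf{E}_m}\mathbf{S}^{-1/2}\mathbf{z}}.$$ Then $\mathbf{z}^\dagger\mathbf{S}^{-1/2}\mathbf{P}^\perp_{\mathbf{S}^{-1/2}\mathbf{E}_t}\mathbf{S}^{-1/2}\mathbf{z}=\frac{1-p_1p_2}{p_1p_2}$, $\mathbf{z}^\dagger\mathbf{S}^{-1/2}\mathbf{P}^\perp_{\mathbf{S}^{-1/2}\mathbf{E}_m}\mathbf{S}^{-1/2}\mathbf{z}=\frac{1-p_2}{p_2}$, and consequently $t_{\mathrm{GLRT}}=1/p_1$.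
   Context: $\mathbf{E}_t=[\mathbf{I}_t\ \mathbf{0}\ \mathbf{0}]^T\in\mathbb{C}^{N\times t}$, $\mathbf{E}_r=[\mathbf{0}\ \mathbf{I}_r\ \mathbf{0}]^T\in\mathbb{C}^{N\times r}$, $\mathbf{E}_m=[\mathbf{E}_t\ \mathbf{E}_r]$. For a full-column-rank $\mathbf{A}$, $\mathbf{P}_{\mathbf{A}}=\mathbf{A}(\mathbf{A}^\dagger\mathbf{A})^{-1}\mathbf{A}^\dagger$ and $\mathbf{P}^\perp_{\mathbf{A}}=\mathbf{I}_N-\mathbf{P}_{\mathbf{A}}$; $\mathbf{S}^{-1/2}$ is the Hermitian positive definite square root of $\mathbf{S}^{-1}$. Partition $\mathbf{z}=[\mathbf{z}_1^T\ \mathbf{z}_2^T\ \mathbf{z}_3^T]^T$ with sizes $t,r,N-m$ and $\mathbf{S}$ conformably into blocks $\mathbf{S}_{ij}$. $\mathbf{z}_{2.3}=\mathbf{z}_2-\mathbf{S}_{23}\mathbf{S}_{33}^{-1}\mathbf{z}_3$, $\mathbf{S}_{2.3}=\mathbf{S}_{22}-\mathbf{S}_{23}\mathbf{S}_{33}^{-1}\mathbf{S}_{32}$, $m_1=\mathbf{z}_{2.3}^\dagger\mathbf{S}_{2.3}^{-1}\mathbf{z}_{2.3}$, $m_2=\mathbf{z}_3^\dagger\mathbf{S}_{33}^{-1}\mathbf{z}_3$, $p_1=1/\bigl(1+\frac{m_1}{1+m_2}\bigr)$, $p_2=1/(1+m_2)$. *)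

theory Defs
  imports "Jordan_Normal_Form.Schur_Decomposition"
begin

definition qform :: "complex vec \<Rightarrow> complex mat \<Rightarrow> complex vec \<Rightarrow> complex" where
  "qform x A y = scalar_prod (map_vec cnj x) (A *\<^sub>v y)"

definition hermitian_mat :: "complex mat \<Rightarrow> bool" where
  "hermitian_mat A \<longleftrightarrow> square_mat A \<and> mat_adjoint A = A"

definition pos_def_mat :: "complex mat \<Rightarrow> bool" where
  "pos_def_mat A \<longleftrightarrow> hermitian_mat A \<and>
     (\<forall>v \<in> carrier_vec (dim_row A). v \<noteq> 0\<^sub>v (dim_row A) \<longrightarrow>
        qform v A v \<in> \<real> \<and> 0 < Re (qform v A v))"

definition mat_inv :: "complex mat \<Rightarrow> complex mat" where
  "mat_inv A = (SOME B. B \<in> carrier_mat (dim_row A) (dim_row A) \<and> inverts_mat A B \<and> inverts_mat B A)"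

definition inv_sqrt :: "complex mat \<Rightarrow> complex mat" where
  "inv_sqrt S = (SOME R. R \<in> carrier_mat (dim_row S) (dim_row S) \<and> pos_def_mat R \<and> R * R = mat_inv S)"

definition proj_mat :: "complex mat \<Rightarrow> complex mat" where
  "proj_mat A = A * mat_inv (mat_adjoint A * A) * mat_adjoint A"

definition proj_perp :: "complex mat \<Rightarrow> complex mat" where
  "proj_perp A = 1\<^sub>m (dim_row A) - proj_mat A"

definition E_t :: "nat \<Rightarrow> nat \<Rightarrow> complex mat" where
  "E_t N t = mat N t (\<lambda>(i, j). if i = j then 1 else 0)"

definition E_r :: "nat \<Rightarrow> nat \<Rightarrow> nat \<Rightarrow> complex mat" where
  "E_r N t r = mat N r (\<lambda>(i, j). if i = t + j then 1 else 0)"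

definition E_m :: "nat \<Rightarrow> nat \<Rightarrow> nat \<Rightarrow> complex mat" where
  "E_m N t r = mat_of_cols N (cols (E_t N t) @ cols (E_r N t r))"

definition subvec :: "complex vec \<Rightarrow> nat \<Rightarrow> nat \<Rightarrow> complex vec" where
  "subvec z off n = vec n (\<lambda>i. z $ (off + i))"

definition subblock :: "complex mat \<Rightarrow> nat \<Rightarrow> nat \<Rightarrow> nat \<Rightarrow> nat \<Rightarrow> complex mat" where
  "subblock S o1 n1 o2 n2 = mat n1 n2 (\<lambda>(i, j). S $$ (o1 + i, o2 + j))"

end

theory Submission
  imports Defs
begin

text \<open>Whitening by R = S^(-1/2) turns R P_perp(R E) R into W - W E (E^H W E)^-1 E^H W with
  W = S^-1, and when the columns of E and F are complementary sets of coordinate vectors this equals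
  F (F^H S F)^-1 F^H. Hence both quadratic forms of the statistic are quadratic forms in the inverse of
  a trailing principal block of S: for E_m this is m2 itself, and for E_t the inverse of the trailing
  (N - t)-block splits along its Schur complement into m1 + m2. The three identities are then field
  arithmetic in m1, m2 >= 0. The square root S^(-1/2) exists by induction on the dimension: a unitary
  change of basis making an eigenvector the first basis vector splits off a 1 x 1 block.\<close>

lemma dim_row_mat_adjoint[simp]: "dim_row (mat_adjoint A) = dim_col A"
  and dim_col_mat_adjoint[simp]: "dim_col (mat_adjoint A) = dim_row A"
  by (auto simp: mat_adjoint_def)

lemma mat_adjoint_carrier[simp, intro]: "A \<in> carrier_mat nr nc \<Longrightarrow> mat_adjoint A \<in> carrier_mat nc nr"
  by (metis dim_row_mat_adjoint dim_col_mat_adjoint carrier_matD carrier_matI)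

lemma index_mat_adjoint[simp]:
  "i < dim_col A \<Longrightarrow> j < dim_row A \<Longrightarrow> mat_adjoint A $$ (i, j) = cnj (A $$ (j, i))"
  unfolding mat_adjoint_def mat_of_rows_def by simp

lemma mat_adjoint_adjoint[simp]: "mat_adjoint (mat_adjoint (A :: complex mat)) = A"
  by (rule eq_matI) auto

lemma mat_adjoint_one[simp]: "mat_adjoint (1\<^sub>m n :: complex mat) = 1\<^sub>m n"
  by (rule eq_matI) auto

lemma mat_adjoint_zero[simp]: "mat_adjoint (0\<^sub>m n m :: complex mat) = 0\<^sub>m m n"
  by (rule eq_matI) auto

lemma row_mat_adjoint: "i < dim_col A \<Longrightarrow> row (mat_adjoint A) i = conjugate (col (A :: complex mat) i)"
  by (intro eq_vecI) auto

lemma mat_adjoint_mult: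
  "dim_col A = dim_row B \<Longrightarrow> mat_adjoint ((A :: complex mat) * B) = mat_adjoint B * mat_adjoint A"
  by (rule eq_matI) (auto simp: scalar_prod_def mult.commute)

lemma mat_adjoint_minus:
  "dim_row A = dim_row B \<Longrightarrow> dim_col A = dim_col B \<Longrightarrow>
   mat_adjoint ((A :: complex mat) - B) = mat_adjoint A - mat_adjoint B"
  by (intro eq_matI) auto

lemma scalar_prod_mat_adjoint:
  assumes x: "x \<in> carrier_vec n" and A: "A \<in> carrier_mat n k" and w: "w \<in> carrier_vec k"
  shows "conjugate x \<bullet> ((A :: complex mat) *\<^sub>v w) = conjugate (mat_adjoint A *\<^sub>v x) \<bullet> w"
proof -
  have "conjugate x \<bullet> (A *\<^sub>v w) = (\<Sum>i<n. cnj (x$i) * (\<Sum>j<k. A$$(i,j) * w$j))"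
    using assms by (auto simp: scalar_prod_def lessThan_atLeast0)
  also have "\<dots> = (\<Sum>i<n. \<Sum>j<k. cnj (x$i) * A$$(i,j) * w$j)"
    by (simp add: sum_distrib_left mult.assoc)
  also have "\<dots> = (\<Sum>j<k. \<Sum>i<n. cnj (x$i) * A$$(i,j) * w$j)"
    by (rule sum.swap)
  also have "\<dots> = (\<Sum>j<k. cnj (\<Sum>i<n. cnj (A$$(i,j)) * x$i) * w$j)"
    by (simp add: sum_distrib_right sum_distrib_left mult.commute mult.left_commute)
  also have "\<dots> = conjugate (mat_adjoint A *\<^sub>v x) \<bullet> w"
    using assms by (auto simp: scalar_prod_def lessThan_atLeast0 intro!: sum.cong)
  finally show ?thesis .
qed

lemma conjugate_append_vec: "conjugate (v @\<^sub>v w) = conjugate v @\<^sub>v conjugate (w :: complex vec)"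
  by (intro eq_vecI) auto

lemma conjugate_minus_vec_dim:
  "dim_vec v = dim_vec w \<Longrightarrow> conjugate ((v :: complex vec) - w) = conjugate v - conjugate w"
  by (intro eq_vecI) auto

text \<open>The _dim variants restate library lemmas with dimension equations instead of carrier
  membership, so that simp can discharge their side conditions.\<close>

lemma assoc_mult_mat_dim:
  "dim_col A = dim_row B \<Longrightarrow> dim_col B = dim_row C \<Longrightarrow> (A :: complex mat) * B * C = A * (B * C)"
  by (rule assoc_mult_mat[of A "dim_row A" "dim_col A" B "dim_col B" C "dim_col C"]) auto

lemma mat_adjoint_mult3:
  "dim_col A = dim_row B \<Longrightarrow> dim_col B = dim_row C \<Longrightarrow>
   mat_adjoint ((A :: complex mat) * B * C) = mat_adjoint C * mat_adjoint B * mat_adjoint A"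
  by (simp add: mat_adjoint_mult assoc_mult_mat_dim)

lemma scalar_prod_mat_adjoint_dim:
  "dim_vec x = dim_row A \<Longrightarrow> dim_vec w = dim_col A \<Longrightarrow>
   conjugate x \<bullet> ((A :: complex mat) *\<^sub>v w) = conjugate (mat_adjoint A *\<^sub>v x) \<bullet> w"
  by (rule scalar_prod_mat_adjoint[of x "dim_row A" A "dim_col A" w]) (auto intro: carrier_vecI)

lemma mult_add_distrib_mat_dim:
  "dim_col A = dim_row B \<Longrightarrow> dim_row B = dim_row C \<Longrightarrow> dim_col B = dim_col C \<Longrightarrow>
   (A :: complex mat) * (B + C) = A * B + A * C"
  by (rule mult_add_distrib_mat[of A "dim_row A" "dim_col A" B "dim_col B" C]) auto

lemma add_mult_distrib_mat_dim:
  "dim_col A = dim_row C \<Longrightarrow> dim_row A = dim_row B \<Longrightarrow> dim_col A = dim_col B \<Longrightarrow>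
   ((A :: complex mat) + B) * C = A * C + B * C"
  by (rule add_mult_distrib_mat[of A "dim_row A" "dim_col A" B C "dim_col C"]) auto

lemma mult_minus_distrib_mat_dim:
  "dim_col A = dim_row B \<Longrightarrow> dim_row B = dim_row C \<Longrightarrow> dim_col B = dim_col C \<Longrightarrow>
   (A :: complex mat) * (B - C) = A * B - A * C"
  by (rule mult_minus_distrib_mat[of A "dim_row A" "dim_col A" B "dim_col B" C]) auto

lemma minus_mult_distrib_mat_dim:
  "dim_col A = dim_row C \<Longrightarrow> dim_row A = dim_row B \<Longrightarrow> dim_col A = dim_col B \<Longrightarrow>
   ((A :: complex mat) - B) * C = A * C - B * C"
  by (rule minus_mult_distrib_mat[of A "dim_row A" "dim_col A" B C "dim_col C"]) auto

lemmas mat_dim_simps = assoc_mult_mat_dim mult_add_distrib_mat_dim add_mult_distrib_mat_dim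
  mult_minus_distrib_mat_dim minus_mult_distrib_mat_dim

lemma assoc_mult_mat_vec_dim:
  "dim_col A = dim_row B \<Longrightarrow> dim_col B = dim_vec v \<Longrightarrow> (A :: complex mat) * B *\<^sub>v v = A *\<^sub>v (B *\<^sub>v v)"
  by (rule assoc_mult_mat_vec[of A "dim_row A" "dim_col A" B "dim_col B"]) (auto intro: carrier_vecI)

lemma one_mult_mat_vec_dim: "dim_vec v = n \<Longrightarrow> 1\<^sub>m n *\<^sub>v (v :: complex vec) = v"
  by (rule one_mult_mat_vec) (auto intro: carrier_vecI)

lemma zero_mult_mat_vec_dim: "dim_vec v = m \<Longrightarrow> 0\<^sub>m n m *\<^sub>v (v :: complex vec) = 0\<^sub>v n"
  by (intro eq_vecI) (auto simp: scalar_prod_def)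

lemma mult_mat_vec_zero_dim: "dim_col A = n \<Longrightarrow> (A :: complex mat) *\<^sub>v 0\<^sub>v n = 0\<^sub>v (dim_row A)"
  by (intro eq_vecI) (auto simp: scalar_prod_def)

lemmas mat_vec_dim_simps = assoc_mult_mat_vec_dim one_mult_mat_vec_dim zero_mult_mat_vec_dim
  mult_mat_vec_zero_dim

lemma mult_add_distrib_mat_vec_dim:
  "dim_vec v = dim_col A \<Longrightarrow> dim_vec w = dim_col A \<Longrightarrow> (A :: complex mat) *\<^sub>v (v + w) = A *\<^sub>v v + A *\<^sub>v w"
  by (rule mult_add_distrib_mat_vec[of A "dim_row A" "dim_col A"]) (auto intro: carrier_vecI)

lemma mult_minus_distrib_mat_vec_dim:
  "dim_vec v = dim_col A \<Longrightarrow> dim_vec w = dim_col A \<Longrightarrow> (A :: complex mat) *\<^sub>v (v - w) = A *\<^sub>v v - A *\<^sub>v w"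
  by (rule mult_minus_distrib_mat_vec[of A "dim_row A" "dim_col A"]) (auto intro: carrier_vecI)

lemma add_mult_distrib_mat_vec_dim:
  "dim_row A = dim_row B \<Longrightarrow> dim_col A = dim_col B \<Longrightarrow> dim_vec v = dim_col A \<Longrightarrow>
   ((A :: complex mat) + B) *\<^sub>v v = A *\<^sub>v v + B *\<^sub>v v"
  by (rule add_mult_distrib_mat_vec[of A "dim_row A" "dim_col A"]) (auto intro: carrier_vecI)

lemma minus_mult_distrib_mat_vec_dim:
  "dim_row A = dim_row B \<Longrightarrow> dim_col A = dim_col B \<Longrightarrow> dim_vec v = dim_col A \<Longrightarrow>
   ((A :: complex mat) - B) *\<^sub>v v = A *\<^sub>v v - B *\<^sub>v v"
  by (rule minus_mult_distrib_mat_vec[of A "dim_row A" "dim_col A"]) (auto intro: carrier_vecI)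

lemmas mat_vec_distrib_dim = mult_add_distrib_mat_vec_dim mult_minus_distrib_mat_vec_dim
  add_mult_distrib_mat_vec_dim minus_mult_distrib_mat_vec_dim

section \<open>Quadratic forms, inverses and positive definiteness\<close>

lemma qform_conjugate: "qform x A y = conjugate x \<bullet> (A *\<^sub>v y)"
proof -
  have "map_vec cnj x = conjugate x" by (intro eq_vecI) auto
  then show ?thesis unfolding qform_def by simp
qed

lemma qform_compression:
  "dim_row F = dim_row M \<Longrightarrow> dim_col M = dim_row M \<Longrightarrow> dim_vec w = dim_col F \<Longrightarrow>
   qform w (mat_adjoint F * M * F) w = qform (F *\<^sub>v w) M (F *\<^sub>v w)"
  unfolding qform_conjugate by (simp add: assoc_mult_mat_vec_dim scalar_prod_mat_adjoint_dim)

lemma qform_zero_vec: "dim_col A = n \<Longrightarrow> qform (0\<^sub>v n) A (0\<^sub>v n) = 0"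
  unfolding qform_conjugate by (simp add: mult_mat_vec_zero_dim scalar_prod_def)

lemma mat_inv_eqI:
  assumes A: "(A :: complex mat) \<in> carrier_mat n n" and B: "B \<in> carrier_mat n n" and AB: "A * B = 1\<^sub>m n"
  shows "mat_inv A = B"
proof -
  have BA: "B * A = 1\<^sub>m n" by (rule mat_mult_left_right_inverse[OF A B AB])
  have "\<exists>C. C \<in> carrier_mat (dim_row A) (dim_row A) \<and> inverts_mat A C \<and> inverts_mat C A"
    using A B AB BA by (intro exI[of _ B]) (auto simp: inverts_mat_def)
  from someI_ex[OF this] have C: "mat_inv A \<in> carrier_mat n n" "mat_inv A * A = 1\<^sub>m n"
    unfolding mat_inv_def inverts_mat_def using A by auto
  have "mat_inv A = (mat_inv A * A) * B" using C(1) A B AB by simp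
  also have "\<dots> = B" using C(2) B by simp
  finally show ?thesis .
qed

lemma mat_inv_kernel_trivial:
  assumes A: "(A :: complex mat) \<in> carrier_mat n n"
    and ker: "\<And>v. v \<in> carrier_vec n \<Longrightarrow> A *\<^sub>v v = 0\<^sub>v n \<Longrightarrow> v = 0\<^sub>v n"
  shows "mat_inv A \<in> carrier_mat n n" "A * mat_inv A = 1\<^sub>m n" "mat_inv A * A = 1\<^sub>m n"
proof -
  have "det A \<noteq> 0" using det_0_iff_vec_prod_zero[OF A] ker by blast
  from det_non_zero_imp_unit[OF A this, of undefined]
  obtain B where B: "B \<in> carrier_mat n n" "A * B = 1\<^sub>m n" "B * A = 1\<^sub>m n"
    unfolding Units_def ring_mat_def by auto
  then show "mat_inv A \<in> carrier_mat n n" "A * mat_inv A = 1\<^sub>m n" "mat_inv A * A = 1\<^sub>m n"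
    using mat_inv_eqI[OF A B(1,2)] by auto
qed

lemma pos_def_mat_iff:
  "pos_def_mat A \<longleftrightarrow> hermitian_mat A \<and>
     (\<forall>v \<in> carrier_vec (dim_row A). v \<noteq> 0\<^sub>v (dim_row A) \<longrightarrow> 0 < qform v A v)"
  by (auto simp: pos_def_mat_def less_complex_def complex_is_Real_iff)

lemma pos_def_hermitian: "pos_def_mat A \<Longrightarrow> mat_adjoint A = A"
  unfolding pos_def_mat_def hermitian_mat_def by auto

lemma pos_def_qform_pos:
  "pos_def_mat A \<Longrightarrow> A \<in> carrier_mat n n \<Longrightarrow> v \<in> carrier_vec n \<Longrightarrow> v \<noteq> 0\<^sub>v n \<Longrightarrow> 0 < qform v A v"
  unfolding pos_def_mat_iff by auto

lemma pos_def_qform_nonneg: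
  assumes "pos_def_mat A" "A \<in> carrier_mat n n" "dim_vec v = n"
  shows "0 \<le> qform v A v"
  using pos_def_qform_pos[OF assms(1,2), of v] assms qform_zero_vec[of A n]
  by (cases "v = 0\<^sub>v n") (auto intro: carrier_vecI)

lemma pos_def_mat_inv:
  assumes A: "(A :: complex mat) \<in> carrier_mat n n" and pd: "pos_def_mat A"
  shows "mat_inv A \<in> carrier_mat n n" "A * mat_inv A = 1\<^sub>m n" "mat_inv A * A = 1\<^sub>m n"
proof -
  have "v = 0\<^sub>v n" if v: "v \<in> carrier_vec n" "A *\<^sub>v v = 0\<^sub>v n" for v
  proof (rule ccontr)
    assume "v \<noteq> 0\<^sub>v n"
    then have "0 < qform v A v" using pos_def_qform_pos[OF pd A v(1)] by blast
    then show False unfolding qform_conjugate v(2) using v(1) by simp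
  qed
  then show "mat_inv A \<in> carrier_mat n n" "A * mat_inv A = 1\<^sub>m n" "mat_inv A * A = 1\<^sub>m n"
    using mat_inv_kernel_trivial[OF A] by blast+
qed

lemma pos_def_mat_inv_pos_def:
  assumes A: "(A :: complex mat) \<in> carrier_mat n n" and pd: "pos_def_mat A"
  shows "pos_def_mat (mat_inv A)"
proof -
  note W = pos_def_mat_inv[OF A pd]
  have AH: "mat_adjoint A = A" using pos_def_hermitian[OF pd] .
  have "A * mat_adjoint (mat_inv A) = 1\<^sub>m n"
    using arg_cong[OF W(3), of mat_adjoint] carrier_matD[OF W(1)] A AH by (simp add: mat_adjoint_mult)
  then have WH: "mat_adjoint (mat_inv A) = mat_inv A"
    by (rule sym[OF mat_inv_eqI[OF A mat_adjoint_carrier[OF W(1)]]])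
  have "0 < qform v (mat_inv A) v" if v: "v \<in> carrier_vec n" "v \<noteq> 0\<^sub>v n" for v
  proof -
    define w where "w = mat_inv A *\<^sub>v v"
    have w: "w \<in> carrier_vec n" unfolding w_def by (rule mult_mat_vec_carrier[OF W(1) v(1)])
    have Aw: "A *\<^sub>v w = v"
      unfolding w_def using A W v by (simp add: assoc_mult_mat_vec_dim[symmetric] one_mult_mat_vec_dim)
    then have "w \<noteq> 0\<^sub>v n" using v A by (auto simp: mult_mat_vec_zero_dim)
    moreover have "qform v (mat_inv A) v = conjugate v \<bullet> w" unfolding qform_conjugate w_def ..
    moreover have "\<dots> = qform w A w"
      unfolding qform_conjugate Aw[symmetric] using scalar_prod_mat_adjoint[OF w A w] AH by simp
    ultimately show ?thesis using pos_def_qform_pos[OF pd A w] by simp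
  qed
  then show ?thesis unfolding pos_def_mat_iff hermitian_mat_def using W(1) WH by auto
qed

lemma pos_def_compression:
  assumes M: "M \<in> carrier_mat n n" and pd: "pos_def_mat M"
    and E: "E \<in> carrier_mat n k" and EE: "mat_adjoint E * E = 1\<^sub>m k"
  shows "pos_def_mat (mat_adjoint E * M * E)"
proof -
  have H: "mat_adjoint (mat_adjoint E * M * E) = mat_adjoint E * M * E"
    using M E pos_def_hermitian[OF pd] by (simp add: mat_adjoint_mult3)
  have "0 < qform w (mat_adjoint E * M * E) w" if w: "w \<in> carrier_vec k" "w \<noteq> 0\<^sub>v k" for w
  proof -
    have "E *\<^sub>v w \<noteq> 0\<^sub>v n"
    proof
      assume "E *\<^sub>v w = 0\<^sub>v n"
      then have "(mat_adjoint E * E) *\<^sub>v w = 0\<^sub>v k" using E w by (simp add: mat_vec_dim_simps)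
      then show False using w by (simp add: EE)
    qed
    then show ?thesis using pos_def_qform_pos[OF pd M, of "E *\<^sub>v w"] qform_compression[of E M w] M E w
      by auto
  qed
  then show ?thesis unfolding pos_def_mat_iff hermitian_mat_def using M E H by auto
qed

lemma pos_def_compression_mat_inv:
  assumes "M \<in> carrier_mat n n" "pos_def_mat M" "E \<in> carrier_mat n k" "mat_adjoint E * E = 1\<^sub>m k"
  shows "mat_inv (mat_adjoint E * M * E) \<in> carrier_mat k k"
    "mat_adjoint E * M * E * mat_inv (mat_adjoint E * M * E) = 1\<^sub>m k"
    "mat_inv (mat_adjoint E * M * E) * (mat_adjoint E * M * E) = 1\<^sub>m k"
proof -
  have "mat_adjoint E * M * E \<in> carrier_mat k k" using assms(1,3) by auto
  from pos_def_mat_inv[OF this pos_def_compression[OF assms]]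
  show "mat_inv (mat_adjoint E * M * E) \<in> carrier_mat k k"
    "mat_adjoint E * M * E * mat_inv (mat_adjoint E * M * E) = 1\<^sub>m k"
    "mat_inv (mat_adjoint E * M * E) * (mat_adjoint E * M * E) = 1\<^sub>m k" by auto
qed

section \<open>Coordinate selection matrices\<close>

text \<open>The columns of sel_mat N q k are the unit vectors e_q, ..., e_(q+k-1); E_t, E_r,
  subvec and subblock are products with such matrices.\<close>

definition sel_mat :: "nat \<Rightarrow> nat \<Rightarrow> nat \<Rightarrow> complex mat" where
  "sel_mat N q k = mat N k (\<lambda>(i, j). if i = q + j then 1 else 0)"

lemma sel_mat_carrier[simp, intro]: "sel_mat N q k \<in> carrier_mat N k"
  and dim_row_sel_mat[simp]: "dim_row (sel_mat N q k) = N"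
  and dim_col_sel_mat[simp]: "dim_col (sel_mat N q k) = k"
  unfolding sel_mat_def by auto

lemma index_sel_mat[simp]: "i < N \<Longrightarrow> j < k \<Longrightarrow> sel_mat N q k $$ (i, j) = (if i = q + j then 1 else 0)"
  unfolding sel_mat_def by auto

lemma sum_indicator_mult: "(\<Sum>l<(N::nat). (if l = a then 1 else 0) * (f l :: complex)) = (if a < N then f a else 0)"
  by (simp add: if_distrib[of "\<lambda>c. c * _"] sum.delta cong: if_cong)

lemma sum_mult_indicator: "(\<Sum>l<(N::nat). (f l :: complex) * (if l = a then 1 else 0)) = (if a < N then f a else 0)"
  using sum_indicator_mult[where f = f] by (simp add: mult.commute)

lemma adjoint_sel_mult_sel:
  assumes "q + k \<le> N" "q' + k' \<le> N"
  shows "mat_adjoint (sel_mat N q k) * sel_mat N q' k' = mat k k' (\<lambda>(i, j). if q + i = q' + j then 1 else 0)"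
proof (rule eq_matI)
  fix i j assume "i < dim_row (mat k k' (\<lambda>(i, j). if q + i = q' + j then 1 else 0 :: complex))"
    "j < dim_col (mat k k' (\<lambda>(i, j). if q + i = q' + j then 1 else 0 :: complex))"
  then have ij: "i < k" "j < k'" by auto
  have "(mat_adjoint (sel_mat N q k) * sel_mat N q' k') $$ (i, j)
      = (\<Sum>l<N. (if l = q + i then 1 else 0) * (if l = q' + j then 1 else 0))"
    using ij assms by (auto simp: scalar_prod_def lessThan_atLeast0 intro!: sum.cong)
  then show "(mat_adjoint (sel_mat N q k) * sel_mat N q' k') $$ (i, j)
      = mat k k' (\<lambda>(i, j). if q + i = q' + j then 1 else 0) $$ (i, j)"
    using ij assms by (simp add: sum_indicator_mult)
qed auto

lemma sel_mat_isometry: "q + k \<le> N \<Longrightarrow> mat_adjoint (sel_mat N q k) * sel_mat N q k = 1\<^sub>m k"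
  by (subst adjoint_sel_mult_sel) (auto intro!: eq_matI)

lemma sel_mat_orthogonal:
  "q + k \<le> q' \<Longrightarrow> q' + k' \<le> N \<Longrightarrow> mat_adjoint (sel_mat N q k) * sel_mat N q' k' = 0\<^sub>m k k'"
  by (subst adjoint_sel_mult_sel) (auto intro!: eq_matI)

lemma sel_mat_mult_adjoint:
  assumes "q + k \<le> N"
  shows "sel_mat N q k * mat_adjoint (sel_mat N q k) = mat N N (\<lambda>(i, j). if i = j \<and> q \<le> i \<and> i < q + k then 1 else 0)"
proof (rule eq_matI)
  fix i j assume "i < dim_row (mat N N (\<lambda>(i, j). if i = j \<and> q \<le> i \<and> i < q + k then 1 else 0 :: complex))"
     "j < dim_col (mat N N (\<lambda>(i, j). if i = j \<and> q \<le> i \<and> i < q + k then 1 else 0 :: complex))"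
  then have ij: "i < N" "j < N" by auto
  have "(sel_mat N q k * mat_adjoint (sel_mat N q k)) $$ (i, j)
      = (\<Sum>l<k. (if i = q + l then 1 else 0) * (if j = q + l then 1 else 0))"
    using ij assms by (auto simp: scalar_prod_def lessThan_atLeast0 intro!: sum.cong)
  also have "\<dots> = (\<Sum>l<k. if l = i - q then (if i = j \<and> q \<le> i then 1 else 0) else 0)"
    by (rule sum.cong) auto
  finally show "(sel_mat N q k * mat_adjoint (sel_mat N q k)) $$ (i, j)
      = mat N N (\<lambda>(i, j). if i = j \<and> q \<le> i \<and> i < q + k then 1 else 0) $$ (i, j)"
    using ij by (auto simp: sum.delta)
qed auto

lemma E_t_sel_mat: "E_t N t = sel_mat N 0 t"
  unfolding E_t_def sel_mat_def by simp

lemma E_m_sel_mat: "E_m N t r = sel_mat N 0 (t + r)"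
  by (rule eq_matI) (auto simp: E_m_def E_t_def E_r_def mat_of_cols_index nth_append)

lemma subvec_sel_mat:
  assumes "dim_vec z = N" "q + k \<le> N"
  shows "subvec z q k = mat_adjoint (sel_mat N q k) *\<^sub>v z"
proof (rule eq_vecI)
  fix i assume "i < dim_vec (mat_adjoint (sel_mat N q k) *\<^sub>v z)"
  then have i: "i < k" by simp
  have "(mat_adjoint (sel_mat N q k) *\<^sub>v z) $ i = (\<Sum>l<N. (if l = q + i then 1 else 0) * z $ l)"
    using i assms by (auto simp: scalar_prod_def lessThan_atLeast0 intro!: sum.cong)
  then show "subvec z q k $ i = (mat_adjoint (sel_mat N q k) *\<^sub>v z) $ i"
    using i assms unfolding subvec_def by (simp add: sum_indicator_mult)
qed (simp add: subvec_def)

lemma subblock_sel_mat: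
  assumes S: "S \<in> carrier_mat N N" and "q + k \<le> N" "q' + k' \<le> N"
  shows "subblock S q k q' k' = mat_adjoint (sel_mat N q k) * S * sel_mat N q' k'"
proof (rule eq_matI)
  fix i j assume "i < dim_row (mat_adjoint (sel_mat N q k) * S * sel_mat N q' k')"
    "j < dim_col (mat_adjoint (sel_mat N q k) * S * sel_mat N q' k')"
  then have ij: "i < k" "j < k'" by auto
  have "(mat_adjoint (sel_mat N q k) * S * sel_mat N q' k') $$ (i, j)
      = (mat_adjoint (sel_mat N q k) * (S * sel_mat N q' k')) $$ (i, j)"
    using S by (simp add: assoc_mult_mat_dim)
  also have "\<dots> = (\<Sum>l<N. (if l = q + i then 1 else 0) * (S * sel_mat N q' k') $$ (l, j))"
    using ij S assms by (auto simp: scalar_prod_def lessThan_atLeast0 intro!: sum.cong)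
  also have "\<dots> = (S * sel_mat N q' k') $$ (q + i, j)"
    using ij assms by (simp add: sum_indicator_mult)
  also have "\<dots> = (\<Sum>l<N. S $$ (q + i, l) * (if l = q' + j then 1 else 0))"
    using ij assms S by (auto simp: scalar_prod_def lessThan_atLeast0 intro!: sum.cong)
  also have "\<dots> = S $$ (q + i, q' + j)"
    using ij assms by (simp add: sum_mult_indicator)
  finally show "subblock S q k q' k' $$ (i, j) = (mat_adjoint (sel_mat N q k) * S * sel_mat N q' k') $$ (i, j)"
    using ij unfolding subblock_def by simp
qed (auto simp: subblock_def)

lemma subvec_subvec: "q' + k' \<le> k \<Longrightarrow> subvec (subvec z q k) q' k' = subvec z (q + q') k'"
  by (intro eq_vecI) (auto simp: subvec_def ac_simps)

lemma subblock_subblock: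
  "q1' + k1' \<le> k1 \<Longrightarrow> q2' + k2' \<le> k2 \<Longrightarrow>
   subblock (subblock S q1 k1 q2 k2) q1' k1' q2' k2' = subblock S (q1 + q1') k1' (q2 + q2') k2'"
  by (intro eq_matI) (auto simp: subblock_def ac_simps)

lemma pos_def_subblock:
  assumes "S \<in> carrier_mat N N" "pos_def_mat S" "q + k \<le> N"
  shows "pos_def_mat (subblock S q k q k)"
  using pos_def_compression[OF assms(1,2) sel_mat_carrier sel_mat_isometry[OF assms(3)]]
    subblock_sel_mat[OF assms(1,3,3)] by simp

section \<open>The positive definite square root\<close>

lemma eigenvector_exists:
  assumes A: "(A :: complex mat) \<in> carrier_mat n n" and n: "0 < n"
  obtains lam v where "v \<in> carrier_vec n" "v \<noteq> 0\<^sub>v n" "A *\<^sub>v v = lam \<cdot>\<^sub>v v"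
proof -
  obtain as where cp: "char_poly A = (\<Prod>a\<leftarrow>as. [:- a, 1:])" and len: "length as = n"
    using char_poly_factorized[OF A] by blast
  from len n obtain a where a: "a \<in> set as" by (cases as) auto
  have "poly (char_poly A) a = 0" unfolding cp by (rule linear_poly_root[OF a])
  then have "eigenvalue A a" using eigenvalue_root_char_poly[OF A] by simp
  then show ?thesis using that A unfolding eigenvalue_def eigenvector_def by auto
qed

definition normalize_cvec :: "complex vec \<Rightarrow> complex vec" where
  "normalize_cvec w = complex_of_real (1 / sqrt (Re (w \<bullet>c w))) \<cdot>\<^sub>v w"

lemma normalize_cvec_corthogonal:
  assumes ws: "corthogonal ws" "set ws \<subseteq> carrier_vec n" and ij: "i < length ws" "j < length ws"
  shows "conjugate (normalize_cvec (ws ! i)) \<bullet> normalize_cvec (ws ! j) = (if i = j then 1 else 0)"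
proof (cases "i = j")
  case True
  define w where "w = ws ! i"
  define s where "s = Re (w \<bullet>c w)"
  define c where "c = complex_of_real (1 / sqrt s)"
  have w: "w \<in> carrier_vec n" using ws ij unfolding w_def by auto
  have "w \<bullet>c w \<noteq> 0" using corthogonalD[OF ws(1) ij(1) ij(1)] unfolding w_def by simp
  then have "0 < w \<bullet>c w" using conjugate_square_ge_0_vec[of w] by (simp add: order_less_le)
  then have s: "0 < s" "w \<bullet>c w = complex_of_real s"
    unfolding s_def by (auto simp: less_complex_def complex_eq_iff)
  have "normalize_cvec w = c \<cdot>\<^sub>v w" unfolding normalize_cvec_def c_def s_def ..
  moreover have "cnj c = c" unfolding c_def by simp
  ultimately have "conjugate (normalize_cvec w) \<bullet> normalize_cvec w = c * c * (w \<bullet>c w)"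
    using w by (simp add: conjugate_smult_vec conjugate_vec_sprod_comm[OF w w])
  also have "\<dots> = complex_of_real (1 / sqrt s * (1 / sqrt s) * s)"
    unfolding c_def s(2) by (simp only: of_real_mult)
  also have "\<dots> = 1" using s(1) by (simp add: field_simps)
  finally show ?thesis using True unfolding w_def by simp
next
  case False
  have c: "ws ! i \<in> carrier_vec n" "ws ! j \<in> carrier_vec n" using ws ij by auto
  have "ws ! j \<bullet>c ws ! i = 0" using corthogonalD[OF ws(1) ij(2,1)] False by simp
  then show ?thesis using False c conjugate_vec_sprod_comm[OF c(2,1)]
    by (simp add: normalize_cvec_def conjugate_smult_vec)
qed

lemma mat_of_cols_orthonormal:
  fixes us :: "complex vec list"
  assumes us: "length us = n" "set us \<subseteq> carrier_vec n"
    and ortho: "\<And>i j. i < n \<Longrightarrow> j < n \<Longrightarrow> conjugate (us ! i) \<bullet> us ! j = (if i = j then 1 else 0)"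
  shows "mat_adjoint (mat_of_cols n us) * mat_of_cols n us = 1\<^sub>m n"
proof (rule eq_matI)
  fix i j assume "i < dim_row (1\<^sub>m n :: complex mat)" "j < dim_col (1\<^sub>m n :: complex mat)"
  then have ij: "i < n" "j < n" by auto
  then have ui: "us ! i \<in> carrier_vec n" "us ! j \<in> carrier_vec n" using us by auto
  moreover have "row (mat_adjoint (mat_of_cols n us)) i = conjugate (us ! i)"
    using row_mat_adjoint[of i "mat_of_cols n us"] col_mat_of_cols[of i us n] us ij ui by simp
  ultimately have "(mat_adjoint (mat_of_cols n us) * mat_of_cols n us) $$ (i, j) = conjugate (us ! i) \<bullet> us ! j"
    using us ij ui col_mat_of_cols[of j us n] by simp
  then show "(mat_adjoint (mat_of_cols n us) * mat_of_cols n us) $$ (i, j) = 1\<^sub>m n $$ (i, j)"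
    using ortho[OF ij] ij by simp
qed (use us in auto)

lemma unitary_with_first_column:
  assumes v: "(v :: complex vec) \<in> carrier_vec n" and v0: "v \<noteq> 0\<^sub>v n"
  obtains U c where "U \<in> carrier_mat n n" "mat_adjoint U * U = 1\<^sub>m n" "U * mat_adjoint U = 1\<^sub>m n"
    "col U 0 = c \<cdot>\<^sub>v v"
proof -
  have n: "0 < n" using v v0 by (cases n) auto
  interpret cof_vec_space n "TYPE(complex)" .
  define b where "b = basis_completion v"
  define ws where "ws = gram_schmidt n b"
  define us where "us = map normalize_cvec ws"
  define U where "U = mat_of_cols n us"
  from basis_completion[OF v v0, folded b_def]
  have b: "distinct b" "\<not> lin_dep (set b)" "set b \<subseteq> carrier_vec n" "hd b = v" "length b = n"
    by auto
  then obtain vs where bv: "b = v # vs" using n by (cases b) auto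
  from gram_schmidt_result[OF b(3,1,2) ws_def]
  have ws: "corthogonal ws" "set ws \<subseteq> carrier_vec n" "length ws = n" using b(5) by auto
  have "hd ws = v" unfolding ws_def bv using v by simp
  then have ws0: "ws ! 0 = v" using ws(3) n by (cases ws) auto
  have us: "length us = n" "set us \<subseteq> carrier_vec n"
    using ws by (auto simp: us_def normalize_cvec_def)
  have UU: "mat_adjoint U * U = 1\<^sub>m n"
    unfolding U_def using us ws normalize_cvec_corthogonal[OF ws(1,2)]
    by (intro mat_of_cols_orthonormal) (auto simp: us_def)
  have U: "U \<in> carrier_mat n n" unfolding U_def using us by auto
  have "us ! 0 \<in> carrier_vec n" using us n by auto
  then have "col U 0 = normalize_cvec v"
    using col_mat_of_cols[of 0 us n] us n ws0 ws(3) unfolding U_def by (simp add: us_def)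
  then have "col U 0 = complex_of_real (1 / sqrt (Re (v \<bullet>c v))) \<cdot>\<^sub>v v"
    unfolding normalize_cvec_def .
  then show ?thesis
    using that U UU mat_mult_left_right_inverse[OF mat_adjoint_carrier[OF U] U UU] by blast
qed

lemma qform_four_block_diag:
  assumes A: "A \<in> carrier_mat a a" and D: "D \<in> carrier_mat d d"
    and v: "v \<in> carrier_vec a" and w: "w \<in> carrier_vec d"
  shows "qform (v @\<^sub>v w) (four_block_mat A (0\<^sub>m a d) (0\<^sub>m d a) D) (v @\<^sub>v w) = qform v A v + qform w D w"
proof -
  have "four_block_mat A (0\<^sub>m a d) (0\<^sub>m d a) D *\<^sub>v (v @\<^sub>v w) = (A *\<^sub>v v) @\<^sub>v (D *\<^sub>v w)"
    using four_block_mat_mult_vec[OF A _ _ D v w] A D v w by (simp add: zero_mult_mat_vec_dim)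
  then show ?thesis
    unfolding qform_conjugate conjugate_append_vec
    using scalar_prod_append[of "conjugate v" a "conjugate w" d] A D v w by simp
qed

lemma pos_def_four_block_diag:
  assumes A: "A \<in> carrier_mat a a" "pos_def_mat A" and D: "D \<in> carrier_mat d d" "pos_def_mat D"
  shows "pos_def_mat (four_block_mat A (0\<^sub>m a d) (0\<^sub>m d a) D)" (is "pos_def_mat ?M")
proof -
  have AH: "cnj (A $$ (j, i)) = A $$ (i, j)" if "i < a" "j < a" for i j
    using arg_cong[OF pos_def_hermitian[OF A(2)], of "\<lambda>M. M $$ (i, j)"] that A(1) by simp
  have DH: "cnj (D $$ (j, i)) = D $$ (i, j)" if "i < d" "j < d" for i j
    using arg_cong[OF pos_def_hermitian[OF D(2)], of "\<lambda>M. M $$ (i, j)"] that D(1) by simp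
  have "mat_adjoint ?M $$ (i, j) = ?M $$ (i, j)" if "i < a + d" "j < a + d" for i j
    using that A(1) D(1) by (cases "i < a"; cases "j < a") (auto simp: AH DH)
  then have H: "mat_adjoint ?M = ?M" using A(1) D(1) by (intro eq_matI) auto
  have "0 < qform u ?M u" if u: "u \<in> carrier_vec (a + d)" "u \<noteq> 0\<^sub>v (a + d)" for u
  proof -
    define v w where "v = vec_first u a" and "w = vec_last u d"
    have vw: "v \<in> carrier_vec a" "w \<in> carrier_vec d" unfolding v_def w_def by auto
    have u_eq: "u = v @\<^sub>v w" using u(1) unfolding v_def w_def by simp
    have "v \<noteq> 0\<^sub>v a \<or> w \<noteq> 0\<^sub>v d"
    proof (rule ccontr)
      assume "\<not> ?thesis"
      then have "u = 0\<^sub>v a @\<^sub>v 0\<^sub>v d" using u_eq by simp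
      also have "\<dots> = 0\<^sub>v (a + d)" by (intro eq_vecI) auto
      finally show False using u(2) by simp
    qed
    moreover have "0 \<le> qform v A v" "0 \<le> qform w D w"
      using pos_def_qform_nonneg[OF A(2,1)] pos_def_qform_nonneg[OF D(2,1)] vw by auto
    ultimately have "0 < qform v A v + qform w D w"
      using pos_def_qform_pos[OF A(2,1) vw(1)] pos_def_qform_pos[OF D(2,1) vw(2)]
      by (auto intro: add_pos_nonneg add_nonneg_pos)
    then show ?thesis using qform_four_block_diag[OF A(1) D(1) vw] u_eq by simp
  qed
  then show ?thesis unfolding pos_def_mat_iff hermitian_mat_def using A D H by auto
qed

lemma pos_def_scalar_mat: "0 < s \<Longrightarrow> pos_def_mat (mat 1 1 (\<lambda>_. complex_of_real s))"
proof -
  assume s: "0 < s"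
  have "0 < qform v (mat 1 1 (\<lambda>_. complex_of_real s)) v" if v: "v \<in> carrier_vec 1" "v \<noteq> 0\<^sub>v 1" for v
  proof -
    have "v $ 0 \<noteq> 0"
    proof
      assume "v $ 0 = 0"
      then have "v = 0\<^sub>v 1" using v(1) by (intro eq_vecI) auto
      then show False using v(2) by simp
    qed
    then have "0 < s * (cmod (v $ 0))\<^sup>2" using s by simp
    moreover have "qform v (mat 1 1 (\<lambda>_. complex_of_real s)) v = complex_of_real (s * (cmod (v $ 0))\<^sup>2)"
      using v(1) complex_norm_square[of "v $ 0"]
      by (simp add: qform_conjugate scalar_prod_def ac_simps)
    ultimately show ?thesis by (simp add: less_complex_def)
  qed
  then show ?thesis unfolding pos_def_mat_iff hermitian_mat_def by (auto intro!: eq_matI)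
qed

lemma hermitian_first_column_block:
  assumes B: "B \<in> carrier_mat (Suc k) (Suc k)" "mat_adjoint B = B"
    and col0: "col B 0 = lam \<cdot>\<^sub>v unit_vec (Suc k) 0"
  shows "B = four_block_mat (mat 1 1 (\<lambda>_. lam)) (0\<^sub>m 1 k) (0\<^sub>m k 1) (subblock B 1 k 1 k)"
proof -
  have Bi0: "B $$ (i, 0) = (if i = 0 then lam else 0)" if "i < Suc k" for i
    using arg_cong[OF col0, of "\<lambda>v. v $ i"] that B(1) by auto
  have B0j: "B $$ (0, j) = 0" if "0 < j" "j < Suc k" for j
    using arg_cong[OF B(2), of "\<lambda>M. M $$ (0, j)"] Bi0[OF that(2)] that B(1) by auto
  show ?thesis
    by (rule eq_matI) (use B(1) in \<open>auto simp: Bi0 B0j subblock_def\<close>)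
qed

lemma four_block_diag_square:
  assumes "A \<in> carrier_mat a a" "D \<in> carrier_mat d d"
  shows "four_block_mat A (0\<^sub>m a d) (0\<^sub>m d a) D * four_block_mat A (0\<^sub>m a d) (0\<^sub>m d a) D
    = four_block_mat (A * A) (0\<^sub>m a d) (0\<^sub>m d a) (D * (D :: complex mat))"
  using mult_four_block_mat[OF assms(1) zero_carrier_mat zero_carrier_mat assms(2)
      assms(1) zero_carrier_mat zero_carrier_mat assms(2)] assms by simp

lemma pos_def_four_block_corner:
  assumes D: "D \<in> carrier_mat k k" and pd: "pos_def_mat (four_block_mat (mat 1 1 (\<lambda>_. lam)) (0\<^sub>m 1 k) (0\<^sub>m k 1) D)"
  shows "0 < lam"
proof -
  let ?e = "vec 1 (\<lambda>_. 1) @\<^sub>v 0\<^sub>v k :: complex vec"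
  have "?e $ 0 = 1" by simp
  then have "?e \<noteq> 0\<^sub>v (Suc k)"
  proof (intro notI)
    assume "?e = 0\<^sub>v (Suc k)"
    then have "?e $ 0 = 0" by simp
    then show False using \<open>?e $ 0 = 1\<close> by simp
  qed
  moreover have "?e \<in> carrier_vec (Suc k)"
    using append_carrier_vec[of "vec 1 (\<lambda>_. 1)" 1 "0\<^sub>v k" k] by simp
  moreover have "four_block_mat (mat 1 1 (\<lambda>_. lam)) (0\<^sub>m 1 k) (0\<^sub>m k 1) D \<in> carrier_mat (Suc k) (Suc k)"
    using four_block_carrier_mat[of "mat 1 1 (\<lambda>_. lam)" 1 1 D k k] D by simp
  ultimately have "0 < qform ?e (four_block_mat (mat 1 1 (\<lambda>_. lam)) (0\<^sub>m 1 k) (0\<^sub>m k 1) D) ?e"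
    using pos_def_qform_pos[OF pd] by blast
  also have "\<dots> = lam"
    using qform_four_block_diag[of "mat 1 1 (\<lambda>_. lam)" 1 D k "vec 1 (\<lambda>_. 1)" "0\<^sub>v k"] D
    by (simp add: qform_zero_vec qform_conjugate scalar_prod_def)
  finally show ?thesis .
qed

lemma unitary_conj_sqrt:
  assumes U: "U \<in> carrier_mat n n" "mat_adjoint U * U = 1\<^sub>m n" "U * mat_adjoint U = 1\<^sub>m n"
    and A: "A \<in> carrier_mat n n"
    and R: "R \<in> carrier_mat n n" "pos_def_mat R" "R * R = mat_adjoint U * A * U"
  shows "pos_def_mat (U * R * mat_adjoint U)" "U * R * mat_adjoint U * (U * R * mat_adjoint U) = A"
proof -
  show "pos_def_mat (U * R * mat_adjoint U)"
    using pos_def_compression[OF R(1,2) mat_adjoint_carrier[OF U(1)]] U(3) by simp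
  have dims: "dim_row U = n" "dim_col U = n" "dim_row R = n" "dim_col R = n" "dim_row A = n" "dim_col A = n"
    using U(1) R(1) A by auto
  have "U * R * mat_adjoint U * (U * R * mat_adjoint U) = U * (R * (mat_adjoint U * U) * R) * mat_adjoint U"
    using dims by (simp add: assoc_mult_mat_dim)
  also have "\<dots> = (U * mat_adjoint U) * A * (U * mat_adjoint U)"
    using dims by (simp add: U(2) R(3) assoc_mult_mat_dim)
  finally show "U * R * mat_adjoint U * (U * R * mat_adjoint U) = A"
    using dims by (simp add: U(3))
qed

lemma unitary_eigen_deflation:
  assumes A: "(A :: complex mat) \<in> carrier_mat (Suc k) (Suc k)" "pos_def_mat A"
  obtains U lam B4 where "U \<in> carrier_mat (Suc k) (Suc k)" "mat_adjoint U * U = 1\<^sub>m (Suc k)"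
    "U * mat_adjoint U = 1\<^sub>m (Suc k)" "0 < lam" "B4 \<in> carrier_mat k k" "pos_def_mat B4"
    "mat_adjoint U * A * U = four_block_mat (mat 1 1 (\<lambda>_. complex_of_real lam)) (0\<^sub>m 1 k) (0\<^sub>m k 1) B4"
proof -
  obtain lam v where v: "v \<in> carrier_vec (Suc k)" "v \<noteq> 0\<^sub>v (Suc k)" "A *\<^sub>v v = lam \<cdot>\<^sub>v v"
    using eigenvector_exists[OF A(1)] by blast
  obtain U c where U: "U \<in> carrier_mat (Suc k) (Suc k)" "mat_adjoint U * U = 1\<^sub>m (Suc k)"
      "U * mat_adjoint U = 1\<^sub>m (Suc k)" and Ucol: "col U 0 = c \<cdot>\<^sub>v v"
    using unitary_with_first_column[OF v(1,2)] by blast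
  define B where "B = mat_adjoint U * A * U"
  define B4 where "B4 = subblock B 1 k 1 k"
  have B: "B \<in> carrier_mat (Suc k) (Suc k)" "pos_def_mat B"
    unfolding B_def using U A pos_def_compression[OF A U(1,2)] by auto
  have "A *\<^sub>v col U 0 = lam \<cdot>\<^sub>v col U 0"
    unfolding Ucol using mult_mat_vec[OF A(1) v(1)] v(3) by (auto simp: ac_simps)
  moreover have "col B 0 = (mat_adjoint U * A) *\<^sub>v col U 0"
    unfolding B_def by (rule col_mult2) (use U(1) A(1) in auto)
  ultimately have "col B 0 = mat_adjoint U *\<^sub>v (lam \<cdot>\<^sub>v col U 0)"
    using carrier_matD[OF U(1)] carrier_matD[OF A(1)] by (simp add: assoc_mult_mat_vec_dim)
  also have "\<dots> = lam \<cdot>\<^sub>v (mat_adjoint U *\<^sub>v col U 0)"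
    using mult_mat_vec[OF mat_adjoint_carrier[OF U(1)], of "col U 0" lam] U(1)
    by (simp add: carrier_vecI)
  also have "mat_adjoint U *\<^sub>v col U 0 = unit_vec (Suc k) 0"
    using col_mult2[of "mat_adjoint U" "Suc k" "Suc k" U "Suc k" 0] U(1,2) by simp
  finally have "col B 0 = lam \<cdot>\<^sub>v unit_vec (Suc k) 0" .
  then have B_eq: "B = four_block_mat (mat 1 1 (\<lambda>_. lam)) (0\<^sub>m 1 k) (0\<^sub>m k 1) B4"
    unfolding B4_def using hermitian_first_column_block B pos_def_hermitian by simp
  have B4: "B4 \<in> carrier_mat k k" "pos_def_mat B4"
    unfolding B4_def using pos_def_subblock[OF B, of 1 k] by (auto simp: subblock_def)
  have "0 < lam" using pos_def_four_block_corner[OF B4(1)] B(2) B_eq by simp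
  then have "0 < Re lam" "lam = complex_of_real (Re lam)" by (auto simp: less_complex_def complex_eq_iff)
  then show ?thesis using that[OF U _ B4, of "Re lam"] B_eq unfolding B_def by simp
qed

lemma pos_def_sqrt_exists:
  "(A :: complex mat) \<in> carrier_mat n n \<Longrightarrow> pos_def_mat A \<Longrightarrow>
   \<exists>R \<in> carrier_mat n n. pos_def_mat R \<and> R * R = A"
proof (induction n arbitrary: A)
  case 0
  then have "A * A = A" by (intro eq_matI) auto
  with 0 show ?case by blast
next
  case (Suc k)
  obtain U lam B4 where U: "U \<in> carrier_mat (Suc k) (Suc k)" "mat_adjoint U * U = 1\<^sub>m (Suc k)"
      "U * mat_adjoint U = 1\<^sub>m (Suc k)" and lam: "0 < lam" and B4: "B4 \<in> carrier_mat k k" "pos_def_mat B4"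
    and UAU: "mat_adjoint U * A * U = four_block_mat (mat 1 1 (\<lambda>_. complex_of_real lam)) (0\<^sub>m 1 k) (0\<^sub>m k 1) B4"
    using unitary_eigen_deflation[OF Suc.prems] by blast
  obtain R4 where R4: "R4 \<in> carrier_mat k k" "pos_def_mat R4" "R4 * R4 = B4"
    using Suc.IH[OF B4] by blast
  define R where "R = four_block_mat (mat 1 1 (\<lambda>_. complex_of_real (sqrt lam))) (0\<^sub>m 1 k) (0\<^sub>m k 1) R4"
  have R: "R \<in> carrier_mat (Suc k) (Suc k)" "pos_def_mat R"
    unfolding R_def using R4 pos_def_four_block_diag[OF _ pos_def_scalar_mat R4(1,2)] lam by auto
  have "sqrt lam * sqrt lam = lam" using lam by (simp add: abs_of_pos)
  then have "complex_of_real (sqrt lam) * complex_of_real (sqrt lam) = complex_of_real lam"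
    unfolding of_real_mult[symmetric] by simp
  then have "R * R = mat_adjoint U * A * U"
    unfolding R_def UAU using four_block_diag_square[of _ 1, OF _ R4(1)] R4(3)
    by (auto intro!: cong_four_block_mat eq_matI simp: scalar_prod_def)
  then have "pos_def_mat (U * R * mat_adjoint U) \<and> U * R * mat_adjoint U * (U * R * mat_adjoint U) = A"
    using unitary_conj_sqrt[OF U Suc.prems(1) R] by blast
  moreover have "U * R * mat_adjoint U \<in> carrier_mat (Suc k) (Suc k)" using U(1) R(1) by auto
  ultimately show ?case by blast
qed

lemma inv_sqrt:
  assumes "S \<in> carrier_mat N N" "pos_def_mat S"
  shows "inv_sqrt S \<in> carrier_mat N N" "mat_adjoint (inv_sqrt S) = inv_sqrt S"
    "inv_sqrt S * inv_sqrt S = mat_inv S"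
proof -
  have "\<exists>R. R \<in> carrier_mat (dim_row S) (dim_row S) \<and> pos_def_mat R \<and> R * R = mat_inv S"
    using pos_def_sqrt_exists[OF pos_def_mat_inv(1)[OF assms] pos_def_mat_inv_pos_def[OF assms]] assms
    by auto
  from someI_ex[OF this] show "inv_sqrt S \<in> carrier_mat N N" "mat_adjoint (inv_sqrt S) = inv_sqrt S"
    "inv_sqrt S * inv_sqrt S = mat_inv S"
    unfolding inv_sqrt_def using assms pos_def_hermitian by auto
qed

section \<open>Complementary orthogonal projections\<close>

text \<open>The columns of E and F together form an orthonormal basis, i.e. [E F] is unitary.\<close>

definition unitary_split :: "complex mat \<Rightarrow> complex mat \<Rightarrow> bool" where
  "unitary_split E F \<longleftrightarrow> dim_row F = dim_row E \<and>
     mat_adjoint E * E = 1\<^sub>m (dim_col E) \<and> mat_adjoint F * F = 1\<^sub>m (dim_col F) \<and>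
     mat_adjoint E * F = 0\<^sub>m (dim_col E) (dim_col F) \<and>
     E * mat_adjoint E + F * mat_adjoint F = 1\<^sub>m (dim_row E)"

lemma unitary_split_sel_mat: "a \<le> n \<Longrightarrow> unitary_split (sel_mat n 0 a) (sel_mat n a (n - a))"
  unfolding unitary_split_def
  by (auto simp: sel_mat_isometry sel_mat_orthogonal sel_mat_mult_adjoint intro!: eq_matI)

lemma unitary_splitD:
  assumes "unitary_split E F" "E \<in> carrier_mat n k" "F \<in> carrier_mat n l"
  shows "mat_adjoint E * E = 1\<^sub>m k" "mat_adjoint F * F = 1\<^sub>m l" "mat_adjoint E * F = 0\<^sub>m k l"
    "mat_adjoint F * E = 0\<^sub>m l k" "E * mat_adjoint E + F * mat_adjoint F = 1\<^sub>m n"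
proof -
  show EF: "mat_adjoint E * F = 0\<^sub>m k l" and "mat_adjoint E * E = 1\<^sub>m k" "mat_adjoint F * F = 1\<^sub>m l"
    "E * mat_adjoint E + F * mat_adjoint F = 1\<^sub>m n"
    using assms unfolding unitary_split_def by auto
  show "mat_adjoint F * E = 0\<^sub>m l k"
    using arg_cong[OF EF, of mat_adjoint] carrier_matD[OF assms(2)] carrier_matD[OF assms(3)]
    by (simp add: mat_adjoint_mult)
qed

lemma unitary_split_right_absorb:
  assumes EF: "unitary_split E F" and E: "E \<in> carrier_mat n k" and F: "F \<in> carrier_mat n l"
    and X: "X \<in> carrier_mat m n" and XE: "X * E = 0\<^sub>m m k"
  shows "X * F * mat_adjoint F = X"
proof -
  have dims: "dim_row E = n" "dim_col E = k" "dim_row F = n" "dim_col F = l" "dim_row X = m" "dim_col X = n"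
    using E F X by auto
  have "X = X * (E * mat_adjoint E + F * mat_adjoint F)"
    using dims by (simp add: unitary_splitD(5)[OF EF E F])
  also have "\<dots> = (X * E) * mat_adjoint E + X * F * mat_adjoint F"
    using dims by (simp add: mult_add_distrib_mat_dim assoc_mult_mat_dim)
  also have "\<dots> = X * F * mat_adjoint F" unfolding XE using dims by (intro eq_matI) auto
  finally show ?thesis by (rule sym)
qed

lemma unitary_split_left_absorb:
  assumes EF: "unitary_split E F" and E: "E \<in> carrier_mat n k" and F: "F \<in> carrier_mat n l"
    and X: "X \<in> carrier_mat n m" and EX: "mat_adjoint E * X = 0\<^sub>m k m"
  shows "F * (mat_adjoint F * X) = X"
proof -
  have dims: "dim_row E = n" "dim_col E = k" "dim_row F = n" "dim_col F = l" "dim_row X = n" "dim_col X = m"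
    using E F X by auto
  have "X = (E * mat_adjoint E + F * mat_adjoint F) * X"
    using dims by (simp add: unitary_splitD(5)[OF EF E F])
  also have "\<dots> = E * (mat_adjoint E * X) + F * (mat_adjoint F * X)"
    using dims by (simp add: add_mult_distrib_mat_dim assoc_mult_mat_dim)
  also have "\<dots> = F * (mat_adjoint F * X)" unfolding EX using dims by (intro eq_matI) auto
  finally show ?thesis by (rule sym)
qed

lemma deflation_props:
  fixes S W E F G :: "complex mat"
  assumes S: "S \<in> carrier_mat n n" and W: "W \<in> carrier_mat n n" "W * S = 1\<^sub>m n"
    and E: "E \<in> carrier_mat n k" and F: "F \<in> carrier_mat n l" and EF: "mat_adjoint E * F = 0\<^sub>m k l"
    and G: "G \<in> carrier_mat k k" "mat_adjoint E * W * E * G = 1\<^sub>m k" "G * (mat_adjoint E * W * E) = 1\<^sub>m k"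
  defines "X \<equiv> W - W * E * G * mat_adjoint E * W"
  shows "X * E = 0\<^sub>m n k" "mat_adjoint E * X = 0\<^sub>m k n" "X * S * F = F"
proof -
  have dims: "dim_row S = n" "dim_col S = n" "dim_row W = n" "dim_col W = n" "dim_row E = n"
    "dim_col E = k" "dim_row F = n" "dim_col F = l" "dim_row G = k" "dim_col G = k"
    using S W E F G by auto
  have "X * E = W * E - W * E * (G * (mat_adjoint E * W * E))"
    unfolding X_def using dims by (simp add: mat_dim_simps)
  then show "X * E = 0\<^sub>m n k" using dims by (intro eq_matI) (auto simp: G(3))
  have "mat_adjoint E * X = mat_adjoint E * W - (mat_adjoint E * W * E * G) * (mat_adjoint E * W)"
    unfolding X_def using dims by (simp add: mat_dim_simps)
  then show "mat_adjoint E * X = 0\<^sub>m k n" using dims by (intro eq_matI) (auto simp: G(2))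
  have "X * S * F = (W * S) * F - W * E * G * (mat_adjoint E * (W * S) * F)"
    unfolding X_def using dims by (simp add: mat_dim_simps)
  then show "X * S * F = F" using dims by (intro eq_matI) (auto simp: W(2) EF)
qed

lemma mat_inv_deflation:
  assumes S: "S \<in> carrier_mat n n" "pos_def_mat S" and EF: "unitary_split E F"
    and E: "E \<in> carrier_mat n k" and F: "F \<in> carrier_mat n l"
  shows "mat_inv S - mat_inv S * E * mat_inv (mat_adjoint E * mat_inv S * E) * mat_adjoint E * mat_inv S
       = F * mat_inv (mat_adjoint F * S * F) * mat_adjoint F"
proof -
  define W where "W = mat_inv S"
  define X where "X = W - W * E * mat_inv (mat_adjoint E * W * E) * mat_adjoint E * W"
  note EF' = unitary_splitD[OF EF E F]
  have W: "W \<in> carrier_mat n n" "W * S = 1\<^sub>m n" "pos_def_mat W"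
    unfolding W_def using pos_def_mat_inv[OF S] pos_def_mat_inv_pos_def[OF S] by auto
  have G: "mat_inv (mat_adjoint E * W * E) \<in> carrier_mat k k"
    "mat_adjoint E * W * E * mat_inv (mat_adjoint E * W * E) = 1\<^sub>m k"
    "mat_inv (mat_adjoint E * W * E) * (mat_adjoint E * W * E) = 1\<^sub>m k"
    by (rule pos_def_compression_mat_inv[OF W(1,3) E EF'(1)])+
  note X = deflation_props[OF S(1) W(1,2) E F EF'(3) G, folded X_def]
  have dims: "dim_row S = n" "dim_col S = n" "dim_row X = n" "dim_col X = n" "dim_row E = n"
    "dim_col E = k" "dim_row F = n" "dim_col F = l"
    using S E F W(1) unfolding X_def by auto
  have FX: "X \<in> carrier_mat n n" unfolding X_def using W(1) G(1) E by auto
  have XFF: "X * F * mat_adjoint F = X" by (rule unitary_split_right_absorb[OF EF E F FX X(1)])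
  have "mat_adjoint F * X * F * (mat_adjoint F * S * F) = mat_adjoint F * (X * F * mat_adjoint F) * S * F"
    using dims by (simp add: assoc_mult_mat_dim)
  also have "\<dots> = mat_adjoint F * (X * S * F)" unfolding XFF using dims by (simp add: assoc_mult_mat_dim)
  also have "\<dots> = 1\<^sub>m l" using X(3) EF'(2) by simp
  finally have XS: "mat_adjoint F * X * F * (mat_adjoint F * S * F) = 1\<^sub>m l" .
  have FXF: "mat_adjoint F * X * F \<in> carrier_mat l l" and FSF: "mat_adjoint F * S * F \<in> carrier_mat l l"
    using F S(1) FX by auto
  have "F * mat_inv (mat_adjoint F * S * F) * mat_adjoint F = F * (mat_adjoint F * (X * F * mat_adjoint F))"
    unfolding mat_inv_eqI[OF FSF FXF mat_mult_left_right_inverse[OF FXF FSF XS]]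
    using dims by (simp add: assoc_mult_mat_dim)
  also have "\<dots> = X" unfolding XFF by (rule unitary_split_left_absorb[OF EF E F FX X(2)])
  finally show ?thesis unfolding X_def W_def by (rule sym)
qed

text \<open>mat_inv is unspecified on singular matrices, hence the carrier hypothesis on the inverse.\<close>

lemma hermitian_sandwich_proj_perp:
  assumes R: "(R :: complex mat) \<in> carrier_mat n n" "mat_adjoint R = R" and E: "E \<in> carrier_mat n k"
    and G: "mat_inv (mat_adjoint E * (R * R) * E) \<in> carrier_mat k k"
  shows "R * proj_perp (R * E) * R
       = R * R - R * R * E * mat_inv (mat_adjoint E * (R * R) * E) * mat_adjoint E * (R * R)"
proof -
  define G where "G = mat_inv (mat_adjoint E * (R * R) * E)"
  have dims: "dim_row R = n" "dim_col R = n" "dim_row E = n" "dim_col E = k" using R E by auto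
  have "mat_adjoint (R * E) = mat_adjoint E * R" using dims R(2) by (simp add: mat_adjoint_mult)
  then have "proj_perp (R * E) = 1\<^sub>m n - R * E * G * (mat_adjoint E * R)"
    unfolding proj_perp_def proj_mat_def G_def using dims by (simp add: assoc_mult_mat_dim)
  then show ?thesis
    unfolding G_def[symmetric] using dims G[folded G_def] by (simp add: mat_dim_simps)
qed

lemma unitary_split_vec:
  assumes PQ: "unitary_split P Q" and P: "P \<in> carrier_mat n a" and Q: "Q \<in> carrier_mat n b"
    and v: "dim_vec v = n"
  shows "v = P *\<^sub>v (mat_adjoint P *\<^sub>v v) + Q *\<^sub>v (mat_adjoint Q *\<^sub>v v)"
proof -
  have "P *\<^sub>v (mat_adjoint P *\<^sub>v v) + Q *\<^sub>v (mat_adjoint Q *\<^sub>v v) = (P * mat_adjoint P + Q * mat_adjoint Q) *\<^sub>v v"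
    using P Q v by (simp add: add_mult_distrib_mat_vec_dim assoc_mult_mat_vec_dim)
  also have "\<dots> = v" using v by (simp add: unitary_splitD(5)[OF PQ P Q] one_mult_mat_vec_dim)
  finally show ?thesis by (rule sym)
qed

lemma unitary_split_scalar_prod:
  assumes PQ: "unitary_split P Q" and P: "P \<in> carrier_mat n a" and Q: "Q \<in> carrier_mat n b"
    and x: "dim_vec x = n" and y: "dim_vec y = n"
  shows "conjugate x \<bullet> y = conjugate (mat_adjoint P *\<^sub>v x) \<bullet> (mat_adjoint P *\<^sub>v y)
      + conjugate (mat_adjoint Q *\<^sub>v x) \<bullet> (mat_adjoint Q *\<^sub>v y)"
proof -
  have "conjugate x \<bullet> y = conjugate x \<bullet> (P *\<^sub>v (mat_adjoint P *\<^sub>v y) + Q *\<^sub>v (mat_adjoint Q *\<^sub>v y))"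
    using arg_cong[OF unitary_split_vec[OF PQ P Q y], of "\<lambda>v. conjugate x \<bullet> v"] .
  also have "\<dots> = conjugate x \<bullet> (P *\<^sub>v (mat_adjoint P *\<^sub>v y)) + conjugate x \<bullet> (Q *\<^sub>v (mat_adjoint Q *\<^sub>v y))"
    using P Q x by (intro scalar_prod_add_distrib[of _ n]) (auto intro: carrier_vecI)
  finally show ?thesis
    using P Q x y by (simp add: scalar_prod_mat_adjoint_dim)
qed

section \<open>Schur complements\<close>

lemma unitary_split_block_equations:
  assumes PQ: "unitary_split P Q" and P: "P \<in> carrier_mat n a" and Q: "Q \<in> carrier_mat n b"
    and M: "M \<in> carrier_mat n n" and y: "dim_vec y = n"
  shows "mat_adjoint P *\<^sub>v (M *\<^sub>v y) =
      (mat_adjoint P * M * P) *\<^sub>v (mat_adjoint P *\<^sub>v y) + (mat_adjoint P * M * Q) *\<^sub>v (mat_adjoint Q *\<^sub>v y)"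
    and "mat_adjoint Q *\<^sub>v (M *\<^sub>v y) =
      (mat_adjoint Q * M * P) *\<^sub>v (mat_adjoint P *\<^sub>v y) + (mat_adjoint Q * M * Q) *\<^sub>v (mat_adjoint Q *\<^sub>v y)"
  using arg_cong[OF unitary_split_vec[OF PQ P Q y], of "\<lambda>v. mat_adjoint P *\<^sub>v (M *\<^sub>v v)"]
    arg_cong[OF unitary_split_vec[OF PQ P Q y], of "\<lambda>v. mat_adjoint Q *\<^sub>v (M *\<^sub>v v)"] P Q M y
  by (simp_all add: mult_add_distrib_mat_vec_dim assoc_mult_mat_vec_dim)

text \<open>The witness y has P-component v and satisfies the lower block row Q^H M y = 0, so its
  M-quadratic form reduces to the Schur complement form of v.\<close>

lemma schur_complement_qform:
  assumes M: "M \<in> carrier_mat n n" and PQ: "unitary_split P Q"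
    and P: "P \<in> carrier_mat n a" and Q: "Q \<in> carrier_mat n b"
    and Di: "Di \<in> carrier_mat b b" "mat_adjoint Q * M * Q * Di = 1\<^sub>m b" and v: "dim_vec v = a"
  defines "A \<equiv> mat_adjoint P * M * P" and "B \<equiv> mat_adjoint P * M * Q" and "C \<equiv> mat_adjoint Q * M * P"
    and "y \<equiv> P *\<^sub>v v - Q *\<^sub>v (Di *\<^sub>v (mat_adjoint Q * M * P *\<^sub>v v))"
  shows "qform v (A - B * Di * C) v = qform y M y" and "mat_adjoint P *\<^sub>v y = v"
proof -
  note PQ' = unitary_splitD[OF PQ P Q]
  have dims: "dim_row M = n" "dim_col M = n" "dim_row P = n" "dim_col P = a" "dim_row Q = n"
    "dim_col Q = b" "dim_row Di = b" "dim_col Di = b" "dim_vec y = n"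
    using M P Q Di(1) v unfolding y_def C_def by auto
  have "mat_adjoint P *\<^sub>v y = (mat_adjoint P * P) *\<^sub>v v - (mat_adjoint P * Q) *\<^sub>v (Di *\<^sub>v (C *\<^sub>v v))"
    unfolding y_def C_def using dims v by (simp add: mat_vec_distrib_dim assoc_mult_mat_vec_dim)
  then show Py: "mat_adjoint P *\<^sub>v y = v"
    using dims v by (intro eq_vecI) (auto simp: PQ'(1,3) mat_vec_dim_simps)
  have "mat_adjoint Q *\<^sub>v (M *\<^sub>v y) = C *\<^sub>v v - (mat_adjoint Q * M * Q * Di) *\<^sub>v (C *\<^sub>v v)"
    unfolding y_def C_def using dims v by (simp add: mat_vec_distrib_dim assoc_mult_mat_vec_dim)
  then have QMy: "mat_adjoint Q *\<^sub>v (M *\<^sub>v y) = 0\<^sub>v b"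
    using dims v by (intro eq_vecI) (auto simp: Di(2) one_mult_mat_vec_dim C_def)
  have PMy: "mat_adjoint P *\<^sub>v (M *\<^sub>v y) = (A - B * Di * C) *\<^sub>v v"
    unfolding y_def A_def B_def C_def using dims v by (simp add: mat_vec_distrib_dim assoc_mult_mat_vec_dim)
  have My: "dim_vec (M *\<^sub>v y) = n" using dims by simp
  have "conjugate (mat_adjoint Q *\<^sub>v y) \<bullet> 0\<^sub>v b = 0" by (simp add: scalar_prod_def)
  then have "qform y M y = conjugate v \<bullet> ((A - B * Di * C) *\<^sub>v v)"
    unfolding qform_conjugate unitary_split_scalar_prod[OF PQ P Q dims(9) My] Py PMy QMy by simp
  then show "qform v (A - B * Di * C) v = qform y M y" unfolding qform_conjugate by simp
qed

lemma schur_complement_pos_def: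
  assumes M: "M \<in> carrier_mat n n" "pos_def_mat M" and PQ: "unitary_split P Q"
    and P: "P \<in> carrier_mat n a" and Q: "Q \<in> carrier_mat n b"
  defines "A \<equiv> mat_adjoint P * M * P" and "B \<equiv> mat_adjoint P * M * Q"
    and "C \<equiv> mat_adjoint Q * M * P" and "D \<equiv> mat_adjoint Q * M * Q"
  shows "pos_def_mat (A - B * mat_inv D * C)"
proof -
  have D: "D \<in> carrier_mat b b" "pos_def_mat D"
    unfolding D_def using pos_def_compression[OF M Q unitary_splitD(2)[OF PQ P Q]] M Q by auto
  note Di = pos_def_mat_inv[OF D]
  have dims: "dim_row M = n" "dim_col M = n" "dim_row P = n" "dim_col P = a" "dim_row Q = n"
    "dim_col Q = b" "dim_row (mat_inv D) = b" "dim_col (mat_inv D) = b"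
    using M P Q Di(1) by auto
  have "mat_adjoint (A - B * mat_inv D * C) = A - B * mat_inv D * C"
    unfolding A_def B_def C_def
    using dims pos_def_hermitian[OF M(2)] pos_def_hermitian[OF pos_def_mat_inv_pos_def[OF D]]
    by (simp add: mat_adjoint_minus mat_adjoint_mult assoc_mult_mat_dim)
  moreover have "0 < qform v (A - B * mat_inv D * C) v" if v: "v \<in> carrier_vec a" "v \<noteq> 0\<^sub>v a" for v
  proof -
    define y where "y = P *\<^sub>v v - Q *\<^sub>v (mat_inv D *\<^sub>v (C *\<^sub>v v))"
    note y = schur_complement_qform[OF M(1) PQ P Q Di(1,2)[unfolded D_def], of v,
        folded A_def B_def C_def y_def D_def]
    have "y \<noteq> 0\<^sub>v n" using y(2) v dims by (auto simp: mult_mat_vec_zero_dim)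
    moreover have "y \<in> carrier_vec n" unfolding y_def C_def using dims by (auto intro: carrier_vecI)
    ultimately show ?thesis using y(1) v pos_def_qform_pos[OF M(2,1)] by auto
  qed
  ultimately show ?thesis
    unfolding pos_def_mat_iff hermitian_mat_def A_def B_def C_def using dims by auto
qed

lemma schur_elimination:
  fixes A B C D Di :: "complex mat"
  assumes A: "A \<in> carrier_mat a a" and B: "B \<in> carrier_mat a b" and C: "C \<in> carrier_mat b a"
    and D: "D \<in> carrier_mat b b" and Di: "Di \<in> carrier_mat b b" "Di * D = 1\<^sub>m b"
    and y2: "dim_vec y2 = a" and y3: "dim_vec y3 = b"
  shows "Di *\<^sub>v (C *\<^sub>v y2 + D *\<^sub>v y3) - Di *\<^sub>v (C *\<^sub>v y2) = y3"
    and "(A - B * Di * C) *\<^sub>v y2 = A *\<^sub>v y2 + B *\<^sub>v y3 - B * Di *\<^sub>v (C *\<^sub>v y2 + D *\<^sub>v y3)"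
proof -
  have DiD: "Di *\<^sub>v (D *\<^sub>v y3) = y3"
    using Di D y3 by (simp add: assoc_mult_mat_vec_dim[symmetric] one_mult_mat_vec_dim)
  have split: "Di *\<^sub>v (C *\<^sub>v y2 + D *\<^sub>v y3) = Di *\<^sub>v (C *\<^sub>v y2) + y3"
    using A B C D Di y2 y3 by (simp add: mult_add_distrib_mat_vec_dim DiD)
  then show "Di *\<^sub>v (C *\<^sub>v y2 + D *\<^sub>v y3) - Di *\<^sub>v (C *\<^sub>v y2) = y3"
    using Di C y2 y3 by (intro eq_vecI) auto
  have "B * Di *\<^sub>v (C *\<^sub>v y2 + D *\<^sub>v y3) = B *\<^sub>v (Di *\<^sub>v (C *\<^sub>v y2)) + B *\<^sub>v y3"
    using A B C D Di y2 y3 by (simp add: assoc_mult_mat_vec_dim split mult_add_distrib_mat_vec_dim DiD)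
  then show "(A - B * Di * C) *\<^sub>v y2 = A *\<^sub>v y2 + B *\<^sub>v y3 - B * Di *\<^sub>v (C *\<^sub>v y2 + D *\<^sub>v y3)"
    using A B C D Di y2 y3
    by (intro eq_vecI) (auto simp: minus_mult_distrib_mat_vec_dim assoc_mult_mat_vec_dim)
qed

lemma mat_inv_mult_vec_blocks:
  assumes M: "M \<in> carrier_mat n n" "pos_def_mat M" and PQ: "unitary_split P Q"
    and P: "P \<in> carrier_mat n a" and Q: "Q \<in> carrier_mat n b" and x: "dim_vec x = n"
  defines "A \<equiv> mat_adjoint P * M * P" and "B \<equiv> mat_adjoint P * M * Q"
    and "C \<equiv> mat_adjoint Q * M * P" and "D \<equiv> mat_adjoint Q * M * Q"
    and "x2 \<equiv> mat_adjoint P *\<^sub>v x" and "x3 \<equiv> mat_adjoint Q *\<^sub>v x" and "y \<equiv> mat_inv M *\<^sub>v x"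
  shows "mat_adjoint Q *\<^sub>v y = mat_inv D *\<^sub>v x3 - mat_inv D *\<^sub>v (C *\<^sub>v (mat_adjoint P *\<^sub>v y))"
    and "mat_adjoint P *\<^sub>v y = mat_inv (A - B * mat_inv D * C) *\<^sub>v (x2 - B * mat_inv D *\<^sub>v x3)"
proof -
  define Sc where "Sc = A - B * mat_inv D * C"
  define y2 y3 where "y2 = mat_adjoint P *\<^sub>v y" and "y3 = mat_adjoint Q *\<^sub>v y"
  have D: "D \<in> carrier_mat b b" "pos_def_mat D"
    unfolding D_def using pos_def_compression[OF M Q unitary_splitD(2)[OF PQ P Q]] M Q by auto
  note Mi = pos_def_mat_inv[OF M] and Di = pos_def_mat_inv[OF D]
  have "Sc \<in> carrier_mat a a" unfolding Sc_def A_def B_def C_def using M P Q Di(1) by auto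
  moreover have "pos_def_mat Sc"
    unfolding Sc_def A_def B_def C_def D_def by (rule schur_complement_pos_def[OF M PQ P Q])
  ultimately have Sc: "Sc \<in> carrier_mat a a" "pos_def_mat Sc" by blast+
  note Sci = pos_def_mat_inv[OF Sc]
  have dims: "dim_vec y = n" "dim_vec y2 = a" "dim_vec y3 = b"
    using P Q Mi(1) x unfolding y_def y2_def y3_def by auto
  have A: "A \<in> carrier_mat a a" and B: "B \<in> carrier_mat a b" and C: "C \<in> carrier_mat b a"
    unfolding A_def B_def C_def using M P Q by auto
  have My: "M *\<^sub>v y = x" unfolding y_def using M(1) Mi x
    by (simp add: assoc_mult_mat_vec_dim[symmetric] one_mult_mat_vec_dim)
  have x2: "x2 = A *\<^sub>v y2 + B *\<^sub>v y3" and x3: "x3 = C *\<^sub>v y2 + D *\<^sub>v y3"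
    unfolding x2_def x3_def A_def B_def C_def D_def y2_def y3_def My[symmetric]
    by (rule unitary_split_block_equations[OF PQ P Q M(1) dims(1)])+
  note elim = schur_elimination[OF A B C D(1) Di(1,3) dims(2,3), folded x2 x3 Sc_def]
  show "mat_adjoint Q *\<^sub>v y = mat_inv D *\<^sub>v x3 - mat_inv D *\<^sub>v (C *\<^sub>v (mat_adjoint P *\<^sub>v y))"
    using elim(1) unfolding y2_def y3_def by (rule sym)
  have "mat_inv Sc *\<^sub>v (x2 - B * mat_inv D *\<^sub>v x3) = mat_inv Sc *\<^sub>v (Sc *\<^sub>v y2)"
    by (simp only: elim(2))
  also have "\<dots> = y2"
    using Sc(1) Sci(1,3) dims by (simp add: assoc_mult_mat_vec_dim[symmetric] one_mult_mat_vec_dim)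
  finally show "mat_adjoint P *\<^sub>v y = mat_inv (A - B * mat_inv D * C) *\<^sub>v (x2 - B * mat_inv D *\<^sub>v x3)"
    unfolding Sc_def y2_def by (rule sym)
qed

lemma qform_mat_inv_schur:
  assumes M: "M \<in> carrier_mat n n" "pos_def_mat M" and PQ: "unitary_split P Q"
    and P: "P \<in> carrier_mat n a" and Q: "Q \<in> carrier_mat n b" and x: "dim_vec x = n"
  defines "A \<equiv> mat_adjoint P * M * P" and "B \<equiv> mat_adjoint P * M * Q"
    and "C \<equiv> mat_adjoint Q * M * P" and "D \<equiv> mat_adjoint Q * M * Q"
    and "x2 \<equiv> mat_adjoint P *\<^sub>v x" and "x3 \<equiv> mat_adjoint Q *\<^sub>v x"
  shows "qform x (mat_inv M) x = qform (x2 - B * mat_inv D *\<^sub>v x3) (mat_inv (A - B * mat_inv D * C))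
      (x2 - B * mat_inv D *\<^sub>v x3) + qform x3 (mat_inv D) x3"
proof -
  define y where "y = mat_inv M *\<^sub>v x"
  define y2 y3 where "y2 = mat_adjoint P *\<^sub>v y" and "y3 = mat_adjoint Q *\<^sub>v y"
  note blocks = mat_inv_mult_vec_blocks[OF M PQ P Q x, folded A_def B_def C_def D_def x2_def x3_def y_def,
      folded y2_def y3_def]
  have D: "D \<in> carrier_mat b b" "pos_def_mat D"
    unfolding D_def using pos_def_compression[OF M Q unitary_splitD(2)[OF PQ P Q]] M Q by auto
  note Di = pos_def_mat_inv[OF D]
  have B: "B \<in> carrier_mat a b" and C: "C \<in> carrier_mat b a" unfolding B_def C_def using M P Q by auto
  have dims: "dim_vec y = n" "dim_vec y2 = a" "dim_vec y3 = b" "dim_vec x2 = a" "dim_vec x3 = b"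
    using P Q pos_def_mat_inv(1)[OF M] x unfolding y_def y2_def y3_def x2_def x3_def by auto
  have "mat_adjoint (mat_inv D * C) = B * mat_inv D"
    using pos_def_hermitian[OF M(2)] pos_def_hermitian[OF pos_def_mat_inv_pos_def[OF D]] Di(1) M P Q
    unfolding B_def C_def by (simp add: mat_adjoint_mult assoc_mult_mat_dim)
  then have "conjugate x3 \<bullet> (mat_inv D *\<^sub>v (C *\<^sub>v y2)) = conjugate (B * mat_inv D *\<^sub>v x3) \<bullet> y2"
    using scalar_prod_mat_adjoint_dim[of x3 "mat_inv D * C" y2] Di(1) C dims
    by (simp add: assoc_mult_mat_vec_dim)
  moreover have "conjugate x3 \<bullet> (mat_inv D *\<^sub>v x3 - mat_inv D *\<^sub>v (C *\<^sub>v y2))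
      = conjugate x3 \<bullet> (mat_inv D *\<^sub>v x3) - conjugate x3 \<bullet> (mat_inv D *\<^sub>v (C *\<^sub>v y2))"
    using Di(1) C dims by (intro scalar_prod_minus_distrib[of _ b]) (auto intro: carrier_vecI)
  ultimately have x3y3: "conjugate x3 \<bullet> y3 = qform x3 (mat_inv D) x3 - conjugate (B * mat_inv D *\<^sub>v x3) \<bullet> y2"
    unfolding qform_conjugate blocks(1) by simp
  have x2y2: "conjugate (x2 - B * mat_inv D *\<^sub>v x3) \<bullet> y2
      = conjugate x2 \<bullet> y2 - conjugate (B * mat_inv D *\<^sub>v x3) \<bullet> y2"
    using B Di(1) dims
    by (simp add: conjugate_minus_vec_dim, intro minus_scalar_prod_distrib[of _ a]) (auto intro: carrier_vecI)
  have "qform x (mat_inv M) x = conjugate x2 \<bullet> y2 + conjugate x3 \<bullet> y3"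
    unfolding qform_conjugate y_def[symmetric] x2_def x3_def y2_def y3_def
    using unitary_split_scalar_prod[OF PQ P Q x dims(1)] .
  also have "\<dots> = conjugate (x2 - B * mat_inv D *\<^sub>v x3) \<bullet> y2 + qform x3 (mat_inv D) x3"
    unfolding x3y3 x2y2 by (simp add: algebra_simps)
  finally show ?thesis unfolding qform_conjugate blocks(2) .
qed

lemma qform_mat_inv_blocks:
  assumes M: "M \<in> carrier_mat n n" "pos_def_mat M" and a: "a \<le> n" and x: "dim_vec x = n"
  defines "x1 \<equiv> subvec x 0 a" and "x2 \<equiv> subvec x a (n - a)"
    and "A \<equiv> subblock M 0 a 0 a" and "B \<equiv> subblock M 0 a a (n - a)"
    and "C \<equiv> subblock M a (n - a) 0 a" and "D \<equiv> subblock M a (n - a) a (n - a)"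
  shows "qform x (mat_inv M) x = qform (x1 - B * mat_inv D *\<^sub>v x2) (mat_inv (A - B * mat_inv D * C))
      (x1 - B * mat_inv D *\<^sub>v x2) + qform x2 (mat_inv D) x2"
    and "0 \<le> qform (x1 - B * mat_inv D *\<^sub>v x2) (mat_inv (A - B * mat_inv D * C)) (x1 - B * mat_inv D *\<^sub>v x2)"
    and "0 \<le> qform x2 (mat_inv D) x2"
proof -
  have blocks: "x1 = mat_adjoint (sel_mat n 0 a) *\<^sub>v x" "x2 = mat_adjoint (sel_mat n a (n - a)) *\<^sub>v x"
    "A = mat_adjoint (sel_mat n 0 a) * M * sel_mat n 0 a"
    "B = mat_adjoint (sel_mat n 0 a) * M * sel_mat n a (n - a)"
    "C = mat_adjoint (sel_mat n a (n - a)) * M * sel_mat n 0 a"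
    "D = mat_adjoint (sel_mat n a (n - a)) * M * sel_mat n a (n - a)"
    unfolding x1_def x2_def A_def B_def C_def D_def
    using subvec_sel_mat[OF x] subblock_sel_mat[OF M(1)] a by auto
  show "qform x (mat_inv M) x = qform (x1 - B * mat_inv D *\<^sub>v x2) (mat_inv (A - B * mat_inv D * C))
      (x1 - B * mat_inv D *\<^sub>v x2) + qform x2 (mat_inv D) x2"
    unfolding blocks by (rule qform_mat_inv_schur[OF M unitary_split_sel_mat[OF a] _ _ x]) auto
  have D: "D \<in> carrier_mat (n - a) (n - a)" "pos_def_mat D"
    unfolding D_def using pos_def_subblock[OF M, of a "n - a"] a by (auto simp: subblock_def)
  have "A - B * mat_inv D * C \<in> carrier_mat a a"
    using pos_def_mat_inv(1)[OF D] unfolding A_def B_def C_def by (auto simp: subblock_def)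
  moreover have "pos_def_mat (A - B * mat_inv D * C)"
    unfolding blocks by (rule schur_complement_pos_def[OF M unitary_split_sel_mat[OF a]]) auto
  ultimately show "0 \<le> qform (x1 - B * mat_inv D *\<^sub>v x2) (mat_inv (A - B * mat_inv D * C))
      (x1 - B * mat_inv D *\<^sub>v x2)"
    using pos_def_qform_nonneg[OF pos_def_mat_inv_pos_def pos_def_mat_inv(1)] by (simp add: B_def subblock_def)
  show "0 \<le> qform x2 (mat_inv D) x2"
    using pos_def_qform_nonneg[OF pos_def_mat_inv_pos_def[OF D] pos_def_mat_inv(1)[OF D]]
    by (simp add: x2_def subvec_def)
qed

section \<open>The GLRT statistic\<close>

lemma qform_whitened_proj_perp:
  assumes S: "S \<in> carrier_mat N N" "pos_def_mat S" and z: "dim_vec z = N" and k: "k \<le> N"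
  shows "qform z (inv_sqrt S * proj_perp (inv_sqrt S * sel_mat N 0 k) * inv_sqrt S) z
       = qform (subvec z k (N - k)) (mat_inv (subblock S k (N - k) k (N - k))) (subvec z k (N - k))"
proof -
  define F where "F = sel_mat N k (N - k)"
  have EF: "unitary_split (sel_mat N 0 k) F" unfolding F_def using unitary_split_sel_mat[OF k] .
  have E: "sel_mat N 0 k \<in> carrier_mat N k" and F: "F \<in> carrier_mat N (N - k)" unfolding F_def by auto
  note R = inv_sqrt[OF S]
  have G: "mat_inv (mat_adjoint (sel_mat N 0 k) * (inv_sqrt S * inv_sqrt S) * sel_mat N 0 k) \<in> carrier_mat k k"
    unfolding R(3) using pos_def_compression_mat_inv(1)[OF pos_def_mat_inv(1)[OF S]
        pos_def_mat_inv_pos_def[OF S] E unitary_splitD(1)[OF EF E F]] .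
  have H: "mat_inv (mat_adjoint F * S * F) \<in> carrier_mat (N - k) (N - k)"
    using pos_def_compression_mat_inv(1)[OF S F unitary_splitD(2)[OF EF E F]] .
  have "inv_sqrt S * proj_perp (inv_sqrt S * sel_mat N 0 k) * inv_sqrt S
      = F * mat_inv (mat_adjoint F * S * F) * mat_adjoint F"
    using hermitian_sandwich_proj_perp[OF R(1,2) E G] mat_inv_deflation[OF S EF E F] R(3) by simp
  also have "\<dots> = mat_adjoint (mat_adjoint F) * mat_inv (mat_adjoint F * S * F) * mat_adjoint F" by simp
  finally have "qform z (inv_sqrt S * proj_perp (inv_sqrt S * sel_mat N 0 k) * inv_sqrt S) z
      = qform (mat_adjoint F *\<^sub>v z) (mat_inv (mat_adjoint F * S * F)) (mat_adjoint F *\<^sub>v z)"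
    using qform_compression[of "mat_adjoint F" "mat_inv (mat_adjoint F * S * F)" z] H F z by simp
  moreover have "mat_adjoint F *\<^sub>v z = subvec z k (N - k)"
    unfolding F_def using subvec_sel_mat[OF z, of k "N - k"] k by simp
  moreover have "mat_adjoint F * S * F = subblock S k (N - k) k (N - k)"
    unfolding F_def using subblock_sel_mat[OF S(1), of k "N - k" k "N - k"] k by simp
  ultimately show ?thesis by simp
qed

lemma glrt_identities:
  assumes "0 \<le> (a :: complex)" and "0 \<le> (b :: complex)"
  defines "p1 \<equiv> 1 / (1 + a / (1 + b))" and "p2 \<equiv> 1 / (1 + b)"
  shows "a + b = (1 - p1 * p2) / (p1 * p2)" and "b = (1 - p2) / p2" and "(1 + (a + b)) / (1 + b) = 1 / p1"
proof -
  have "0 < (1 :: complex)" by (simp add: less_complex_def)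
  then have b: "0 < 1 + b" using assms(2) by (rule add_pos_nonneg)
  then have "0 < 1 + b + a" using assms(1) by (rule add_pos_nonneg)
  then have "1 + b \<noteq> 0" "1 + b + a \<noteq> 0" using b by auto
  moreover have "1 + a / (1 + b) \<noteq> 0" using calculation by (simp add: field_simps)
  ultimately show "a + b = (1 - p1 * p2) / (p1 * p2)" "b = (1 - p2) / p2" "(1 + (a + b)) / (1 + b) = 1 / p1"
    unfolding p1_def p2_def by (simp_all add: field_simps)
qed

theorem mainTheorem6:
  fixes N t r K :: nat and z :: "complex vec" and S :: "complex mat"
  assumes "N \<ge> 2" and "t \<ge> 1" and "r \<ge> 1" and "t + r < N" and "K \<ge> N"
    and "z \<in> carrier_vec N" and "S \<in> carrier_mat N N" and "pos_def_mat S"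
  shows
    "let m = t + r;
         R = inv_sqrt S;
         z2 = subvec z t r; z3 = subvec z m (N - m);
         S22 = subblock S t r t r; S23 = subblock S t r m (N - m);
         S32 = subblock S m (N - m) t r; S33 = subblock S m (N - m) m (N - m);
         z23 = z2 - S23 * mat_inv S33 *\<^sub>v z3;
         S23' = S22 - S23 * mat_inv S33 * S32;
         m1 = qform z23 (mat_inv S23') z23;
         m2 = qform z3 (mat_inv S33) z3;
         p1 = 1 / (1 + m1 / (1 + m2));
         p2 = 1 / (1 + m2);
         qt = qform z (R * proj_perp (R * E_t N t) * R) z;
         qm = qform z (R * proj_perp (R * E_m N t r) * R) z;
         tGLRT = (1 + qt) / (1 + qm)
     in qt = (1 - p1 * p2) / (p1 * p2) \<and> qm = (1 - p2) / p2 \<and> tGLRT = 1 / p1"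
proof -
  note S = assms(7,8) and z = carrier_vecD[OF assms(6)]
  define m where "m = t + r"
  define x H where "x = subvec z t (N - t)" and "H = subblock S t (N - t) t (N - t)"
  have H: "H \<in> carrier_mat (N - t) (N - t)" "pos_def_mat H"
    unfolding H_def using pos_def_subblock[OF S, of t "N - t"] assms(4) by (auto simp: subblock_def)
  have "t \<le> N" "m \<le> N" using assms(4) unfolding m_def by auto
  have qt: "qform z (inv_sqrt S * proj_perp (inv_sqrt S * E_t N t) * inv_sqrt S) z = qform x (mat_inv H) x"
    unfolding E_t_sel_mat x_def H_def using qform_whitened_proj_perp[OF S z \<open>t \<le> N\<close>] .
  have qm: "qform z (inv_sqrt S * proj_perp (inv_sqrt S * E_m N t r) * inv_sqrt S) z
      = qform (subvec z m (N - m)) (mat_inv (subblock S m (N - m) m (N - m))) (subvec z m (N - m))"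
    unfolding E_m_sel_mat m_def[symmetric] using qform_whitened_proj_perp[OF S z \<open>m \<le> N\<close>] .
  have r: "r \<le> N - t" and Nm: "N - t - r = N - m" and xd: "dim_vec x = N - t"
    using assms(4) unfolding m_def x_def subvec_def by auto
  have sub: "subvec x 0 r = subvec z t r" "subvec x r (N - m) = subvec z m (N - m)"
    "subblock H 0 r 0 r = subblock S t r t r" "subblock H 0 r r (N - m) = subblock S t r m (N - m)"
    "subblock H r (N - m) 0 r = subblock S m (N - m) t r"
    "subblock H r (N - m) r (N - m) = subblock S m (N - m) m (N - m)"
    unfolding x_def H_def m_def using assms(4) by (auto simp: subvec_subvec subblock_subblock)
  note blocks = qform_mat_inv_blocks[OF H r xd, unfolded Nm sub]
  show ?thesis
    unfolding Let_def m_def[symmetric] qt qm blocks(1) using glrt_identities[OF blocks(2,3)] by blast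
qed

end
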